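(* Let $f=c_1\wedge\cdots\wedge c_m$ be a Boolean formula over the variables $x_1,\dots,x_n$, where each clause $c_j$ is a CNF clause, a cardinality constraint, an XOR clause, or a NAE clause. Let $F_f=\sum_{j=1}^m \mathrm{FE}_{c_j}$, viewed as a real polynomial on $[-1,1]^n$. Then $f$ is satisfiable if and only if $\min_{x\in[-1,1]^n}F_f(x)=-m$.
   Context: Boolean values are encoded as $\pm1$, with $-1$ standing for True and $+1$ for False; a negated literal $\neg x_i$ corresponds to $-x_i$. The clause types are as follows. - A CNF clause is a disjunction of literals. - A cardinality constraint $D^{\ge k}(L)$ (respectively $D^{\le k}(L)$) on a set $L$ of variables requires at least (respectively at most) $k$ of them to be True. - An XOR clause requires an odd number of its variables to be True. - A NAE clause requires that not all of its variables take the same value. Each clause $c$ is a function $\{\pm1\}^n\to\{\pm1\}$, with value $-1$ exactly when $c$ is satisfied. $\mathrm{FE}_c$ denotes its Fourier expansion: the unique multilinear polynomial $\sum_{S\subseteq[n]}\widehat c(S)\prod_{i\in S}x_i$ that agrees with $c$ on $\{\pm1\}^n$, where $\widehat c(S)=\mathbb{E}_{x\sim\{\pm1\}^n}[c(x)\prod_{i\in S}x_i]$. *)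

theory Defs
  imports Complex_Main
begin

text \<open>Variables are the elements of a finite type 'v (so n = CARD('v)).
  Boolean values are encoded as reals -1 (True) and +1 (False).
  A literal is a pair (v, positive); its value is x v if positive, - x v otherwise.\<close>

datatype 'v clause =
    CNF "('v \<times> bool) list"
  | CardGe nat "'v set"
  | CardLe nat "'v set"
  | XOR "'v set"
  | NAE "'v set"

definition lit_val :: "('v \<times> bool) \<Rightarrow> ('v \<Rightarrow> real) \<Rightarrow> real" where
  "lit_val l x = (if snd l then x (fst l) else - x (fst l))"

fun satisfies :: "('v \<Rightarrow> real) \<Rightarrow> 'v clause \<Rightarrow> bool" where
  "satisfies x (CNF ls) = (\<exists>l\<in>set ls. lit_val l x = -1)"
| "satisfies x (CardGe k L) = (card {v\<in>L. x v = -1} \<ge> k)"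
| "satisfies x (CardLe k L) = (card {v\<in>L. x v = -1} \<le> k)"
| "satisfies x (XOR L) = odd (card {v\<in>L. x v = -1})"
| "satisfies x (NAE L) = (\<not> (\<forall>v\<in>L. \<forall>w\<in>L. x v = x w))"

definition clause_fun :: "'v clause \<Rightarrow> ('v \<Rightarrow> real) \<Rightarrow> real" where
  "clause_fun c x = (if satisfies x c then -1 else 1)"

definition bcube :: "('v \<Rightarrow> real) set" where
  "bcube = {x. \<forall>i. x i \<in> {-1, 1}}"

definition box11 :: "('v \<Rightarrow> real) set" where
  "box11 = {x. \<forall>i. x i \<in> {-1..1}}"

definition fourier_coeff :: "'v::finite clause \<Rightarrow> 'v set \<Rightarrow> real" where
  "fourier_coeff c S = (\<Sum>x\<in>bcube. clause_fun c x * (\<Prod>i\<in>S. x i)) / card (bcube :: ('v \<Rightarrow> real) set)"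

definition FE :: "'v::finite clause \<Rightarrow> ('v \<Rightarrow> real) \<Rightarrow> real" where
  "FE c x = (\<Sum>S\<in>(UNIV :: 'v set set). fourier_coeff c S * (\<Prod>i\<in>S. x i))"

definition F_formula :: "'v::finite clause list \<Rightarrow> ('v \<Rightarrow> real) \<Rightarrow> real" where
  "F_formula cs x = (\<Sum>c\<leftarrow>cs. FE c x)"

definition satisfiable :: "'v clause list \<Rightarrow> bool" where
  "satisfiable cs = (\<exists>x\<in>bcube. \<forall>c\<in>set cs. satisfies x c)"

end

theory Submission
  imports Defs "HOL-Library.FuncSet"
begin

text \<open>For x in the box, the weights \<open>\<Prod>i. (1 + x i * y i) / 2\<close> form the probability
  distribution on the vertices y of the cube whose coordinates are independent with means x i.
  Multiplying out the product shows that the Fourier expansion of a clause at x is the expectation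
  of the clause under this distribution. Hence it is at least -1, with equality only if every
  vertex of positive probability satisfies the clause, and the vertex obtained by rounding the
  signs of x has positive probability. At a vertex x the distribution is the point mass at x,
  so there the expansion agrees with the clause.\<close>

lemma sum_subsets_prod:
  fixes a :: "'v::finite \<Rightarrow> 'a::comm_semiring_1"
  shows "(\<Sum>S\<in>UNIV. \<Prod>i\<in>S. a i) = (\<Prod>i\<in>UNIV. 1 + a i)"
  using prod_add[of UNIV a "\<lambda>_. 1"] by (simp add: Pow_UNIV add.commute)

lemma weighted_sum_lower_bound:
  fixes g w :: "'a \<Rightarrow> real"
  assumes "\<And>y. y \<in> A \<Longrightarrow> 0 \<le> w y" and "\<And>y. y \<in> A \<Longrightarrow> m \<le> g y"
  shows "m * (\<Sum>y\<in>A. w y) \<le> (\<Sum>y\<in>A. g y * w y)"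
  unfolding sum_distrib_left by (intro sum_mono mult_right_mono) (simp_all add: assms)

lemma weighted_sum_eq_lower_bound:
  fixes g w :: "'a \<Rightarrow> real"
  assumes "finite A" and "\<And>y. y \<in> A \<Longrightarrow> 0 \<le> w y" and "\<And>y. y \<in> A \<Longrightarrow> m \<le> g y"
    and "(\<Sum>y\<in>A. g y * w y) = m * (\<Sum>y\<in>A. w y)" and "z \<in> A" and "0 < w z"
  shows "g z = m"
proof -
  have nonneg: "0 \<le> (g y - m) * w y" if "y \<in> A" for y
    using assms(2,3) that by simp
  have "(\<Sum>y\<in>A. (g y - m) * w y) = 0"
    using assms(4) unfolding left_diff_distrib sum_subtractf sum_distrib_left by simp
  then have "(g z - m) * w z = 0"
    using sum_nonneg_eq_0_iff[OF assms(1), of "\<lambda>y. (g y - m) * w y"] nonneg assms(5) by simp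
  with assms(6) show ?thesis by simp
qed

lemma sum_list_lower_bound:
  fixes f :: "'a \<Rightarrow> real"
  assumes "\<And>c. c \<in> set cs \<Longrightarrow> m \<le> f c"
  shows "m * length cs \<le> (\<Sum>c\<leftarrow>cs. f c)"
  using sum_list_mono[of cs "\<lambda>_. m" f] assms by (simp add: sum_list_triv mult.commute)

lemma sum_list_eq_lower_bound_iff:
  fixes f :: "'a \<Rightarrow> real"
  assumes "\<And>c. c \<in> set cs \<Longrightarrow> m \<le> f c"
  shows "(\<Sum>c\<leftarrow>cs. f c) = m * length cs \<longleftrightarrow> (\<forall>c\<in>set cs. f c = m)"
proof -
  have "(\<Sum>c\<leftarrow>cs. f c - m) = (\<Sum>c\<leftarrow>cs. f c) - m * length cs"
    by (simp add: sum_list_subtractf sum_list_triv mult.commute)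
  moreover have "(\<Sum>c\<leftarrow>cs. f c - m) = 0 \<longleftrightarrow> (\<forall>c\<in>set cs. f c = m)"
    using assms by (subst sum_list_nonneg_eq_0_iff) auto
  ultimately show ?thesis by simp
qed

lemma bcube_eq_PiE: "(bcube :: ('v \<Rightarrow> real) set) = PiE UNIV (\<lambda>_. {-1, 1})"
  unfolding bcube_def PiE_def Pi_def extensional_def by auto

lemma finite_bcube: "finite (bcube :: ('v::finite \<Rightarrow> real) set)"
  unfolding bcube_eq_PiE by (intro finite_PiE) auto

lemma card_bcube: "card (bcube :: ('v::finite \<Rightarrow> real) set) = 2 ^ card (UNIV :: 'v set)"
  unfolding bcube_eq_PiE by (subst card_PiE) (auto simp: numeral_2_eq_2)

lemma bcube_coordinate: "x \<in> bcube \<Longrightarrow> x i = -1 \<or> x i = 1"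
  unfolding bcube_def by auto

lemma bcube_subset_box11: "bcube \<subseteq> box11"
proof
  fix x :: "'v \<Rightarrow> real"
  assume "x \<in> bcube"
  then have "x i \<in> {-1..1}" for i
    using bcube_coordinate[of x i] by auto
  then show "x \<in> box11" by (simp add: box11_def)
qed

definition cube_kernel :: "('v \<Rightarrow> real) \<Rightarrow> ('v \<Rightarrow> real) \<Rightarrow> real" where
  "cube_kernel x y = (\<Prod>i\<in>UNIV. 1 + x i * y i)"

lemma fourier_expansion_eq_kernel_sum:
  fixes f :: "('v::finite \<Rightarrow> real) \<Rightarrow> real"
  shows "(\<Sum>S\<in>UNIV. (\<Sum>y\<in>bcube. f y * (\<Prod>i\<in>S. y i)) / card (bcube :: ('v \<Rightarrow> real) set)
            * (\<Prod>i\<in>S. x i))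
         = (\<Sum>y\<in>bcube. f y * cube_kernel x y) / 2 ^ card (UNIV :: 'v set)"
proof -
  have "(\<Sum>S\<in>UNIV. (\<Sum>y\<in>bcube. f y * (\<Prod>i\<in>S. y i)) * (\<Prod>i\<in>S. x i))
      = (\<Sum>S\<in>UNIV. \<Sum>y\<in>bcube. f y * (\<Prod>i\<in>S. x i * y i))"
    unfolding sum_distrib_right prod.distrib by (simp add: mult_ac)
  also have "\<dots> = (\<Sum>y\<in>bcube. \<Sum>S\<in>UNIV. f y * (\<Prod>i\<in>S. x i * y i))"
    by (rule sum.swap)
  also have "\<dots> = (\<Sum>y\<in>bcube. f y * cube_kernel x y)"
    by (simp add: cube_kernel_def sum_distrib_left[symmetric] sum_subsets_prod)
  finally show ?thesis
    by (simp add: card_bcube flip: sum_divide_distrib)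
qed

lemma FE_eq_kernel_sum:
  fixes c :: "'v::finite clause"
  shows "FE c x = (\<Sum>y\<in>bcube. clause_fun c y * cube_kernel x y) / 2 ^ card (UNIV :: 'v set)"
  unfolding FE_def fourier_coeff_def by (rule fourier_expansion_eq_kernel_sum)

lemma sum_cube_kernel:
  fixes x :: "'v::finite \<Rightarrow> real"
  shows "(\<Sum>y\<in>bcube. cube_kernel x y) = 2 ^ card (UNIV :: 'v set)"
proof -
  have "(\<Sum>y\<in>bcube. cube_kernel x y) = (\<Prod>i\<in>(UNIV::'v set). \<Sum>t\<in>{-1, 1::real}. 1 + x i * t)"
    unfolding cube_kernel_def bcube_eq_PiE by (rule prod_sum_PiE[symmetric]) auto
  then show ?thesis by simp
qed

lemma cube_kernel_nonneg:
  assumes "x \<in> box11" and "y \<in> bcube"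
  shows "0 \<le> cube_kernel x y"
  unfolding cube_kernel_def
proof (intro prod_nonneg)
  fix i
  have "-1 \<le> x i" "x i \<le> 1" "y i = -1 \<or> y i = 1"
    using assms bcube_coordinate[OF assms(2), of i] by (auto simp: box11_def)
  then show "0 \<le> 1 + x i * y i" by auto
qed

lemma cube_kernel_bcube:
  fixes x y :: "'v::finite \<Rightarrow> real"
  assumes "x \<in> bcube" "y \<in> bcube"
  shows "cube_kernel x y = (if y = x then 2 ^ card (UNIV :: 'v set) else 0)"
proof (cases "y = x")
  case True
  have "1 + x i * x i = 2" for i
    using bcube_coordinate[OF assms(1), of i] by auto
  with True show ?thesis by (simp add: cube_kernel_def)
next
  case False
  then obtain i where "y i \<noteq> x i" by auto
  then have "1 + x i * y i = 0"
    using bcube_coordinate[OF assms(1), of i] bcube_coordinate[OF assms(2), of i] by auto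
  with False show ?thesis unfolding cube_kernel_def by (auto intro: prod_zero)
qed

definition sign_vertex :: "('v \<Rightarrow> real) \<Rightarrow> ('v \<Rightarrow> real)" where
  "sign_vertex x = (\<lambda>i. if 0 \<le> x i then 1 else -1)"

lemma sign_vertex_in_bcube: "sign_vertex x \<in> bcube"
  unfolding sign_vertex_def bcube_def by auto

lemma cube_kernel_sign_vertex_pos: "x \<in> box11 \<Longrightarrow> 0 < cube_kernel x (sign_vertex x)"
  unfolding cube_kernel_def sign_vertex_def box11_def by (intro prod_pos) auto

lemma FE_bcube:
  fixes x :: "'v::finite \<Rightarrow> real"
  assumes "x \<in> bcube"
  shows "FE c x = clause_fun c x"
proof -
  have "(\<Sum>y\<in>bcube. clause_fun c y * cube_kernel x y)
      = (\<Sum>y\<in>bcube. if y = x then clause_fun c y * 2 ^ card (UNIV :: 'v set) else 0)"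
    using assms by (intro sum.cong) (simp_all add: cube_kernel_bcube)
  then show ?thesis
    using assms by (simp add: FE_eq_kernel_sum finite_bcube)
qed

lemma FE_ge_neg_one:
  assumes "x \<in> box11"
  shows "-1 \<le> FE c (x :: 'v::finite \<Rightarrow> real)"
proof -
  have "-1 * (\<Sum>y\<in>bcube. cube_kernel x y) \<le> (\<Sum>y\<in>bcube. clause_fun c y * cube_kernel x y)"
    using assms by (intro weighted_sum_lower_bound) (auto simp: cube_kernel_nonneg clause_fun_def)
  then show ?thesis
    by (simp add: FE_eq_kernel_sum sum_cube_kernel le_divide_eq)
qed

lemma FE_eq_neg_one_imp_satisfies:
  assumes "x \<in> box11" and "FE c x = -1"
  shows "satisfies (sign_vertex x) c"
proof -
  have "(\<Sum>y\<in>bcube. clause_fun c y * cube_kernel x y) = -1 * (\<Sum>y\<in>bcube. cube_kernel x y)"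
    using assms(2) by (simp add: FE_eq_kernel_sum sum_cube_kernel divide_eq_eq)
  then have "clause_fun c (sign_vertex x) = -1"
    using assms(1)
    by (intro weighted_sum_eq_lower_bound[OF finite_bcube])
       (auto simp: cube_kernel_nonneg clause_fun_def sign_vertex_in_bcube cube_kernel_sign_vertex_pos)
  then show ?thesis by (simp add: clause_fun_def split: if_splits)
qed

lemma F_formula_ge:
  assumes "x \<in> box11"
  shows "- real (length cs) \<le> F_formula cs x"
  using sum_list_lower_bound[of cs "-1" "\<lambda>c. FE c x"] FE_ge_neg_one[OF assms]
  by (simp add: F_formula_def)

lemma F_formula_eq_iff:
  assumes "x \<in> box11"
  shows "F_formula cs x = - real (length cs) \<longleftrightarrow> (\<forall>c\<in>set cs. FE c x = -1)"
  using sum_list_eq_lower_bound_iff[of cs "-1" "\<lambda>c. FE c x"] FE_ge_neg_one[OF assms]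
  by (simp add: F_formula_def)

theorem theorem2:
  fixes cs :: "('v::finite) clause list"
  shows "satisfiable cs \<longleftrightarrow>
    ((\<exists>x\<in>box11. F_formula cs x = - real (length cs)) \<and>
     (\<forall>x\<in>box11. - real (length cs) \<le> F_formula cs x))"
proof
  assume "satisfiable cs"
  then obtain x where x: "x \<in> bcube" and "\<forall>c\<in>set cs. satisfies x c"
    unfolding satisfiable_def by blast
  then have "\<forall>c\<in>set cs. FE c x = -1"
    by (simp add: FE_bcube clause_fun_def)
  moreover have "x \<in> box11"
    using x bcube_subset_box11 by blast
  ultimately show "(\<exists>x\<in>box11. F_formula cs x = - real (length cs)) \<and>
     (\<forall>x\<in>box11. - real (length cs) \<le> F_formula cs x)"
    using F_formula_eq_iff F_formula_ge by blast
next
  assume "(\<exists>x\<in>box11. F_formula cs x = - real (length cs)) \<and>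
     (\<forall>x\<in>box11. - real (length cs) \<le> F_formula cs x)"
  then obtain x where "x \<in> box11" and "F_formula cs x = - real (length cs)" by blast
  then have "\<forall>c\<in>set cs. satisfies (sign_vertex x) c"
    using F_formula_eq_iff FE_eq_neg_one_imp_satisfies by blast
  then show "satisfiable cs"
    unfolding satisfiable_def using sign_vertex_in_bcube by blast
qed

end
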